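(* Let $A$ be a block tridiagonal matrix satisfying the standing hypotheses (H), and write $A^{-1}=[Z_{ij}]$ with $Z_{ij}\in\mathbb{C}^{m\times m}$, $i,j=1,\dots,n$. Then $$\|Z_{ij}\|\le \|Z_{jj}\|\prod_{k=i}^{j-1}\tau_k\quad\text{for all } i<j,\qquad \|Z_{ij}\|\le \|Z_{jj}\|\prod_{k=j+1}^{i}\omega_k\quad\text{for all } i>j.$$ Moreover, for $i=1,\dots,n$, $$\frac{\|I\|}{\|A_i\|+\tau_{i-1}\|C_{i-1}\|+\omega_{i+1}\|B_i\|}\le\|Z_{ii}\|,$$ and, whenever $\|A_i^{-1}\|^{-1}-\tau_{i-1}\|C_{i-1}\|-\omega_{i+1}\|B_i\|>0$, $$\|Z_{ii}\|\le\frac{\|I\|}{\|A_i^{-1}\|^{-1}-\tau_{i-1}\|C_{i-1}\|-\omega_{i+1}\|B_i\|},$$ where $C_0=B_n=0$ and $\tau_0=\omega_{n+1}=0$.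
   Context: $\|\cdot\|$ is a submultiplicative matrix norm on $\mathbb{C}^{m\times m}$, $n\ge 2$, and $A$ is block tridiagonal with diagonal blocks $A_1,\dots,A_n$, superdiagonal blocks $B_1,\dots,B_{n-1}$ (block $(i,i+1)$) and subdiagonal blocks $C_1,\dots,C_{n-1}$ (block $(i+1,i)$), all in $\mathbb{C}^{m\times m}$; set $C_0=B_n=0$. Standing hypotheses (H): $A$ is nonsingular; $B_i$ and $C_i$ are nonsingular for $i=1,\dots,n-1$; every $A_i$ is nonsingular and $\|A_i^{-1}C_{i-1}\|+\|A_i^{-1}B_i\|\le 1$ for $i=1,\dots,n$ (row block diagonal dominance); and $\|A_1^{-1}B_1\|<1$, $\|A_n^{-1}C_{n-1}\|<1$. For $i=1,\dots,n$: $\tau_i=\dfrac{\|A_i^{-1}B_i\|}{1-\|A_i^{-1}C_{i-1}\|}$ and $\omega_i=\dfrac{\|A_i^{-1}C_{i-1}\|}{1-\|A_i^{-1}B_i\|}$. *)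

theory Defs
  imports "HOL-Analysis.Analysis"
begin

type_synonym 'm cmat = "complex^'m^'m"

definition submult_matrix_norm :: "('m::finite cmat \<Rightarrow> real) \<Rightarrow> bool" where
  "submult_matrix_norm N \<longleftrightarrow>
     (\<forall>X. 0 \<le> N X) \<and>
     (\<forall>X. N X = 0 \<longleftrightarrow> X = 0) \<and>
     (\<forall>X Y. N (X + Y) \<le> N X + N Y) \<and>
     (\<forall>c X. N (\<chi> i j. c * X $ i $ j) = cmod c * N X) \<and>
     (\<forall>X Y. N (X ** Y) \<le> N X * N Y)"

definition tridiag_block ::
  "(nat \<Rightarrow> 'm::finite cmat) \<Rightarrow> (nat \<Rightarrow> 'm cmat) \<Rightarrow> (nat \<Rightarrow> 'm cmat) \<Rightarrow> nat \<Rightarrow> nat \<Rightarrow> 'm cmat" where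
  "tridiag_block A B C i j =
     (if j = i then A i else if j = i + 1 then B i else if i = j + 1 then C j else 0)"

definition is_block_inverse ::
  "nat \<Rightarrow> (nat \<Rightarrow> nat \<Rightarrow> 'm::finite cmat) \<Rightarrow> (nat \<Rightarrow> nat \<Rightarrow> 'm cmat) \<Rightarrow> bool" where
  "is_block_inverse n M Z \<longleftrightarrow>
     (\<forall>i\<in>{1..n}. \<forall>j\<in>{1..n}.
        (\<Sum>k=1..n. M i k ** Z k j) = (if i = j then mat 1 else 0) \<and>
        (\<Sum>k=1..n. Z i k ** M k j) = (if i = j then mat 1 else 0))"

definition block_nonsingular :: "nat \<Rightarrow> (nat \<Rightarrow> nat \<Rightarrow> 'm::finite cmat) \<Rightarrow> bool" where
  "block_nonsingular n M \<longleftrightarrow> (\<exists>Z. is_block_inverse n M Z)"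

definition tau ::
  "('m::finite cmat \<Rightarrow> real) \<Rightarrow> (nat \<Rightarrow> 'm cmat) \<Rightarrow> (nat \<Rightarrow> 'm cmat) \<Rightarrow> (nat \<Rightarrow> 'm cmat) \<Rightarrow> nat \<Rightarrow> real" where
  "tau N A B C i = (if i = 0 then 0 else
     N (matrix_inv (A i) ** B i) / (1 - N (matrix_inv (A i) ** C (i - 1))))"

definition omega ::
  "('m::finite cmat \<Rightarrow> real) \<Rightarrow> nat \<Rightarrow> (nat \<Rightarrow> 'm cmat) \<Rightarrow> (nat \<Rightarrow> 'm cmat) \<Rightarrow> (nat \<Rightarrow> 'm cmat) \<Rightarrow> nat \<Rightarrow> real" where
  "omega N n A B C i = (if i = n + 1 then 0 else
     N (matrix_inv (A i) ** C (i - 1)) / (1 - N (matrix_inv (A i) ** B i)))"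

end

theory Submission
  imports Defs
begin

text \<open>
  Solving the i-th block row of A Z = I for Z i j with i \<noteq> j gives
  N (Z i j) \<le> N (inv A_i C_(i-1)) N (Z (i-1) j) + N (inv A_i B_i) N (Z (i+1) j).
  Above the diagonal, induction on i starting from C_0 = 0 gives N (Z (i-1) j) \<le> N (Z i j), so the
  first term can be absorbed into the left-hand side, leaving N (Z i j) \<le> tau_i N (Z (i+1) j); below
  the diagonal the same argument runs downwards from B_n = 0 and yields the factors omega_i.
  Chaining these one-step bounds gives the off-diagonal estimates. On the diagonal, the block row
  I = C_(i-1) Z (i-1) i + A_i Z i i + B_i Z (i+1) i together with N (Z (i-1) i) \<le> tau_(i-1) N (Z i i)
  and N (Z (i+1) i) \<le> omega_(i+1) N (Z i i) bounds N (Z i i) from both sides.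
\<close>

lemma submult_matrix_norm_nonneg: "submult_matrix_norm N \<Longrightarrow> 0 \<le> N X"
  and submult_matrix_norm_zero: "submult_matrix_norm N \<Longrightarrow> N 0 = 0"
  and submult_matrix_norm_pos: "submult_matrix_norm N \<Longrightarrow> X \<noteq> 0 \<Longrightarrow> 0 < N X"
  and submult_matrix_norm_triangle: "submult_matrix_norm N \<Longrightarrow> N (X + Y) \<le> N X + N Y"
  and submult_matrix_norm_mult: "submult_matrix_norm N \<Longrightarrow> N (X ** Y) \<le> N X * N Y"
  unfolding submult_matrix_norm_def by (auto simp: order_less_le)

lemma submult_matrix_norm_uminus:
  assumes "submult_matrix_norm N"
  shows "N (- X) = N X"
proof -
  have "- X = (\<chi> i j. (-1) * X $ i $ j)" by (simp add: vec_eq_iff)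
  then show ?thesis
    using assms unfolding submult_matrix_norm_def by (metis norm_minus_cancel norm_one mult_1)
qed

lemma submult_matrix_norm_diff:
  assumes "submult_matrix_norm N"
  shows "N (X - Y) \<le> N X + N Y"
  using submult_matrix_norm_triangle[OF assms, of X "- Y"]
  by (simp add: submult_matrix_norm_uminus[OF assms])

lemma matrix_inv_right: "invertible X \<Longrightarrow> X ** matrix_inv X = mat 1"
  and matrix_inv_left: "invertible X \<Longrightarrow> matrix_inv X ** X = mat 1"
  unfolding invertible_def matrix_inv_def by (metis (mono_tags, lifting) someI_ex)+

lemma mat_1_neq_0: "(mat 1 :: 'a::zero_neq_one^'n^'n) \<noteq> 0"
proof
  assume "(mat 1 :: 'a^'n^'n) = 0"
  then have "(mat 1 :: 'a^'n^'n) $ undefined $ undefined = 0" by simp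
  then show False by (simp add: mat_def)
qed

lemma invertible_neq_0:
  assumes "invertible (X :: 'a::semiring_1^'n^'n)"
  shows "X \<noteq> 0"
proof
  assume "X = 0"
  with assms have "(mat 1 :: 'a^'n^'n) = 0" unfolding invertible_def by auto
  then show False using mat_1_neq_0 by blast
qed

lemma matrix_inv_neq_0:
  assumes "invertible (X :: 'a::semiring_1^'n^'n)"
  shows "matrix_inv X \<noteq> 0"
proof
  assume "matrix_inv X = 0"
  then have "(mat 1 :: 'a^'n^'n) = 0" using matrix_inv_left[OF assms] by simp
  then show False using mat_1_neq_0 by blast
qed

lemma matrix_inv_mult_neq_0:
  fixes X :: "'a::semiring_1^'n^'n" and Y :: "'a^'p^'n"
  assumes "invertible X" "Y \<noteq> 0"
  shows "matrix_inv X ** Y \<noteq> 0"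
proof
  assume "matrix_inv X ** Y = 0"
  then have "X ** (matrix_inv X ** Y) = 0" by simp
  then show False using assms by (simp add: matrix_mul_assoc matrix_inv_right)
qed

lemma matrix_mul_uminus_right: "(X :: 'a::ring_1^'n^'m) ** (- Y) = - (X ** Y)"
  using matrix_add_ldistrib[of X "- Y" Y] by (simp add: eq_neg_iff_add_eq_0)

lemma tridiag_block_row_sum:
  assumes "1 \<le> i" "i \<le> n" "C 0 = 0" "B n = 0"
  shows "(\<Sum>k=1..n. tridiag_block A B C i k ** Z k j)
        = C (i - 1) ** Z (i - 1) j + A i ** Z i j + B i ** Z (i + 1) j"
proof -
  have "tridiag_block A B C i k ** Z k j =
      (if k = i - 1 then C (i - 1) ** Z (i - 1) j else 0) + (if k = i then A i ** Z i j else 0)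
      + (if k = i + 1 then B i ** Z (i + 1) j else 0)" for k
    using assms(1) by (auto simp: tridiag_block_def)
  then show ?thesis
    using assms by (cases "i = n") (auto simp: sum.distrib sum.delta)
qed

lemma le_divide_one_minus_if_self_bounded:
  fixes x y p b c :: real
  assumes "x \<le> c * p + b * y" "c * p \<le> c * x" "c < 1"
  shows "x \<le> b / (1 - c) * y"
proof -
  have "(1 - c) * x \<le> b * y" using assms(1,2) by (simp add: algebra_simps)
  then show ?thesis using assms(3) by (simp add: field_simps)
qed

lemma divide_le_if_le_mult:
  fixes z d I :: real
  assumes "I \<le> d * z" "0 \<le> I" "0 \<le> z"
  shows "I / d \<le> z"
proof (cases "d > 0")
  case True
  then show ?thesis using assms by (simp add: divide_le_eq mult.commute)
next
  case False
  then have "I / d \<le> 0" using assms by (simp add: divide_nonneg_nonpos)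
  then show ?thesis using assms by linarith
qed

lemma le_divide_if_le_mult_affine:
  fixes z a I s :: real
  assumes "z \<le> a * (I + s * z)" "0 < a" "0 < 1 / a - s"
  shows "z \<le> I / (1 / a - s)"
proof -
  have "z / a \<le> I + s * z" using assms(1,2) by (simp add: divide_le_eq mult.commute)
  then have "z * (1 / a - s) \<le> I" by (simp add: algebra_simps)
  then show ?thesis using assms(3) by (simp add: le_divide_eq)
qed

lemma prod_chain_le_atLeastLessThan:
  fixes f t :: "nat \<Rightarrow> real"
  assumes "i \<le> j"
    and one_step: "\<And>k. i \<le> k \<Longrightarrow> k < j \<Longrightarrow> f k \<le> t k * f (Suc k)"
    and nonneg: "\<And>k. i \<le> k \<Longrightarrow> k < j \<Longrightarrow> 0 \<le> t k"
  shows "f i \<le> f j * (\<Prod>k\<in>{i..<j}. t k)"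
  using assms(1)
proof (induction i rule: inc_induct)
  case (step k)
  have "f k \<le> t k * f (Suc k)" using step.hyps assms(1) by (intro one_step) auto
  also have "\<dots> \<le> t k * (f j * (\<Prod>k\<in>{Suc k..<j}. t k))"
    using step.hyps step.IH by (intro mult_left_mono nonneg) auto
  also have "\<dots> = f j * (\<Prod>k\<in>{k..<j}. t k)"
    using step.hyps by (simp add: prod.atLeast_Suc_lessThan)
  finally show ?case .
qed simp

lemma prod_chain_le_greaterThanAtMost:
  fixes f w :: "nat \<Rightarrow> real"
  assumes "j \<le> i"
    and one_step: "\<And>k. j \<le> k \<Longrightarrow> k < i \<Longrightarrow> f (Suc k) \<le> w (Suc k) * f k"
    and nonneg: "\<And>k. j < k \<Longrightarrow> k \<le> i \<Longrightarrow> 0 \<le> w k"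
  shows "f i \<le> f j * (\<Prod>k\<in>{j<..i}. w k)"
  using assms(1)
proof (induction i rule: dec_induct)
  case (step k)
  have "f (Suc k) \<le> w (Suc k) * f k" using step.hyps assms(1) by (intro one_step) auto
  also have "\<dots> \<le> w (Suc k) * (f j * (\<Prod>k\<in>{j<..k}. w k))"
    using step.hyps step.IH by (intro mult_left_mono nonneg) auto
  also have "\<dots> = f j * (\<Prod>k\<in>insert (Suc k) {j<..k}. w k)"
    by (simp add: mult_ac)
  also have "insert (Suc k) {j<..k} = {j<..Suc k}"
    using step.hyps by auto
  finally show ?case .
qed simp

locale block_tridiag_inverse =
  fixes N :: "'m::finite cmat \<Rightarrow> real"
    and n :: nat
    and A B C :: "nat \<Rightarrow> 'm cmat"
    and Z :: "nat \<Rightarrow> nat \<Rightarrow> 'm cmat"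
  assumes norm: "submult_matrix_norm N"
    and C0: "C 0 = 0" and Bn: "B n = 0"
    and Zinv: "is_block_inverse n (tridiag_block A B C) Z"
    and BC_inv: "\<And>i. 1 \<le> i \<Longrightarrow> i \<le> n - 1 \<Longrightarrow> invertible (B i) \<and> invertible (C i)"
    and A_inv: "\<And>i. 1 \<le> i \<Longrightarrow> i \<le> n \<Longrightarrow> invertible (A i)"
    and dom: "\<And>i. 1 \<le> i \<Longrightarrow> i \<le> n \<Longrightarrow>
               N (matrix_inv (A i) ** C (i - 1)) + N (matrix_inv (A i) ** B i) \<le> 1"
    and first: "N (matrix_inv (A 1) ** B 1) < 1"
    and last: "N (matrix_inv (A n) ** C (n - 1)) < 1"
begin

abbreviation sub_ratio :: "nat \<Rightarrow> real"
  where "sub_ratio i \<equiv> N (matrix_inv (A i) ** C (i - 1))"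

abbreviation super_ratio :: "nat \<Rightarrow> real"
  where "super_ratio i \<equiv> N (matrix_inv (A i) ** B i)"

lemmas norm_nonneg = submult_matrix_norm_nonneg[OF norm]
  and norm_zero = submult_matrix_norm_zero[OF norm]
  and norm_pos = submult_matrix_norm_pos[OF norm]
  and norm_triangle = submult_matrix_norm_triangle[OF norm]
  and norm_mult = submult_matrix_norm_mult[OF norm]
  and norm_uminus = submult_matrix_norm_uminus[OF norm]
  and norm_diff = submult_matrix_norm_diff[OF norm]

lemma sub_ratio_lt_1:
  assumes "1 \<le> i" "i \<le> n"
  shows "sub_ratio i < 1"
proof (cases "i = n")
  case False
  then have "invertible (B i)" using BC_inv[of i] assms by auto
  then have "0 < super_ratio i"
    using norm_pos matrix_inv_mult_neq_0 A_inv[OF assms] invertible_neq_0 by blast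
  then show ?thesis using dom[OF assms] by linarith
qed (use last in simp)

lemma super_ratio_lt_1:
  assumes "1 \<le> i" "i \<le> n"
  shows "super_ratio i < 1"
proof (cases "i = 1")
  case False
  then have "invertible (C (i - 1))" using BC_inv[of "i - 1"] assms by auto
  then have "0 < sub_ratio i"
    using norm_pos matrix_inv_mult_neq_0 A_inv[OF assms] invertible_neq_0 by blast
  then show ?thesis using dom[OF assms] by linarith
qed (use first in simp)

lemma tau_eq: "1 \<le> i \<Longrightarrow> tau N A B C i = super_ratio i / (1 - sub_ratio i)"
  unfolding tau_def by simp

lemma omega_eq: "i \<noteq> n + 1 \<Longrightarrow> omega N n A B C i = sub_ratio i / (1 - super_ratio i)"
  unfolding omega_def by simp

lemma tau_nonneg_le_1:
  assumes "1 \<le> i" "i \<le> n"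
  shows "0 \<le> tau N A B C i \<and> tau N A B C i \<le> 1"
  using tau_eq[OF assms(1)] sub_ratio_lt_1[OF assms] dom[OF assms] norm_nonneg
  by (simp add: divide_le_eq_1)

lemma omega_nonneg_le_1:
  assumes "1 \<le> i" "i \<le> n"
  shows "0 \<le> omega N n A B C i \<and> omega N n A B C i \<le> 1"
  using omega_eq[of i] assms super_ratio_lt_1[OF assms] dom[OF assms] norm_nonneg
  by (simp add: divide_le_eq_1)

lemma block_row:
  assumes "1 \<le> i" "i \<le> n" "1 \<le> j" "j \<le> n"
  shows "C (i - 1) ** Z (i - 1) j + A i ** Z i j + B i ** Z (i + 1) j = (if i = j then mat 1 else 0)"
  using Zinv assms tridiag_block_row_sum[of i n C B A Z j, OF assms(1,2) C0 Bn]
  unfolding is_block_inverse_def by simp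

lemma Z_eq_matrix_inv_mult:
  "1 \<le> i \<Longrightarrow> i \<le> n \<Longrightarrow> Z i j = matrix_inv (A i) ** (A i ** Z i j)"
  by (simp add: matrix_mul_assoc matrix_inv_left[OF A_inv])

lemma norm_Z_off_diag_le:
  assumes "1 \<le> i" "i \<le> n" "1 \<le> j" "j \<le> n" "i \<noteq> j"
  shows "N (Z i j) \<le> sub_ratio i * N (Z (i - 1) j) + super_ratio i * N (Z (i + 1) j)"
proof -
  have "A i ** Z i j = - (C (i - 1) ** Z (i - 1) j + B i ** Z (i + 1) j)"
    using block_row[OF assms(1-4)] assms(5)
    by (simp add: eq_neg_iff_add_eq_0 add_ac del: minus_add_distrib)
  then have "Z i j = matrix_inv (A i) ** - (C (i - 1) ** Z (i - 1) j + B i ** Z (i + 1) j)"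
    using Z_eq_matrix_inv_mult[OF assms(1,2), of j] by simp
  also have "\<dots> = - ((matrix_inv (A i) ** C (i - 1)) ** Z (i - 1) j
                       + (matrix_inv (A i) ** B i) ** Z (i + 1) j)"
    by (simp only: matrix_mul_uminus_right matrix_add_ldistrib matrix_mul_assoc)
  finally have "N (Z i j) \<le> N ((matrix_inv (A i) ** C (i - 1)) ** Z (i - 1) j)
                         + N ((matrix_inv (A i) ** B i) ** Z (i + 1) j)"
    by (simp only: norm_uminus norm_triangle)
  also have "\<dots> \<le> sub_ratio i * N (Z (i - 1) j) + super_ratio i * N (Z (i + 1) j)"
    by (intro add_mono norm_mult)
  finally show ?thesis .
qed

lemma norm_Z_le_tau_mult:
  assumes "1 \<le> i" "i < j" "j \<le> n"
  shows "N (Z i j) \<le> tau N A B C i * N (Z (i + 1) j)"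
proof -
  have absorb: "N (Z k j) \<le> tau N A B C k * N (Z (k + 1) j)"
    if "1 \<le> k" "k < j" "sub_ratio k * N (Z (k - 1) j) \<le> sub_ratio k * N (Z k j)" for k
  proof -
    have "N (Z k j) \<le> sub_ratio k * N (Z (k - 1) j) + super_ratio k * N (Z (k + 1) j)"
      using norm_Z_off_diag_le[of k j] that assms by simp
    from le_divide_one_minus_if_self_bounded[OF this that(3)] show ?thesis
      using sub_ratio_lt_1[of k] tau_eq[of k] that assms by simp
  qed
  from assms show ?thesis
  proof (induction i)
    case (Suc i)
    show ?case
    proof (cases "i = 0")
      case True
      then show ?thesis using Suc.prems C0 by (intro absorb) (simp_all add: norm_zero)
    next
      case False
      then have "N (Z i j) \<le> tau N A B C i * N (Z (Suc i) j)" using Suc by simp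
      also have "\<dots> \<le> N (Z (Suc i) j)"
        using tau_nonneg_le_1[of i] False Suc.prems norm_nonneg
        by (intro mult_left_le_one_le) auto
      finally show ?thesis
        using Suc.prems by (intro absorb mult_left_mono norm_nonneg) simp_all
    qed
  qed simp
qed

lemma norm_Z_le_omega_mult:
  assumes "1 \<le> j" "j < i" "i \<le> n"
  shows "N (Z i j) \<le> omega N n A B C i * N (Z (i - 1) j)"
proof -
  have absorb: "N (Z k j) \<le> omega N n A B C k * N (Z (k - 1) j)"
    if "j < k" "k \<le> n" "super_ratio k * N (Z (k + 1) j) \<le> super_ratio k * N (Z k j)" for k
  proof -
    have "N (Z k j) \<le> super_ratio k * N (Z (k + 1) j) + sub_ratio k * N (Z (k - 1) j)"
      using norm_Z_off_diag_le[of k j] that assms by simp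
    from le_divide_one_minus_if_self_bounded[OF this that(3)] show ?thesis
      using super_ratio_lt_1[of k] omega_eq[of k] that assms by simp
  qed
  from assms(3) show ?thesis
  proof (induction i rule: inc_induct)
    case base
    show ?case using assms Bn by (intro absorb) (simp_all add: norm_zero)
  next
    case (step k)
    have "N (Z (Suc k) j) \<le> omega N n A B C (Suc k) * N (Z k j)" using step by simp
    also have "\<dots> \<le> N (Z k j)"
      using omega_nonneg_le_1[of "Suc k"] step.hyps assms norm_nonneg
      by (intro mult_left_le_one_le) auto
    finally show ?case
      using step.hyps assms by (intro absorb mult_left_mono norm_nonneg) simp_all
  qed
qed

lemma norm_Z_above_diag_le:
  assumes "1 \<le> i" "i < j" "j \<le> n"
  shows "N (Z i j) \<le> N (Z j j) * (\<Prod>k\<in>{i..<j}. tau N A B C k)"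
  using assms norm_Z_le_tau_mult tau_nonneg_le_1
  by (intro prod_chain_le_atLeastLessThan[where f = "\<lambda>k. N (Z k j)"]) auto

lemma norm_Z_below_diag_le:
  assumes "1 \<le> j" "j < i" "i \<le> n"
  shows "N (Z i j) \<le> N (Z j j) * (\<Prod>k\<in>{j<..i}. omega N n A B C k)"
proof (rule prod_chain_le_greaterThanAtMost[where f = "\<lambda>k. N (Z k j)"])
  fix k
  assume "j \<le> k" "k < i"
  then show "N (Z (Suc k) j) \<le> omega N n A B C (Suc k) * N (Z k j)"
    using norm_Z_le_omega_mult[of j "Suc k"] assms by simp
qed (use assms omega_nonneg_le_1 in auto)

lemma norm_C_Z_le:
  assumes "1 \<le> i" "i \<le> n"
  shows "N (C (i - 1) ** Z (i - 1) i) \<le> tau N A B C (i - 1) * N (C (i - 1)) * N (Z i i)"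
proof (cases "i = 1")
  case False
  then have "N (Z (i - 1) i) \<le> tau N A B C (i - 1) * N (Z i i)"
    using norm_Z_le_tau_mult[of "i - 1" i] assms by simp
  then have "N (C (i - 1)) * N (Z (i - 1) i) \<le> N (C (i - 1)) * (tau N A B C (i - 1) * N (Z i i))"
    by (intro mult_left_mono norm_nonneg)
  then show ?thesis using norm_mult[of "C (i - 1)" "Z (i - 1) i"] by (simp add: algebra_simps)
qed (use C0 in \<open>simp add: norm_zero\<close>)

lemma norm_B_Z_le:
  assumes "1 \<le> i" "i \<le> n"
  shows "N (B i ** Z (i + 1) i) \<le> omega N n A B C (i + 1) * N (B i) * N (Z i i)"
proof (cases "i = n")
  case False
  then have "N (Z (i + 1) i) \<le> omega N n A B C (i + 1) * N (Z i i)"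
    using norm_Z_le_omega_mult[of i "i + 1"] assms by simp
  then have "N (B i) * N (Z (i + 1) i) \<le> N (B i) * (omega N n A B C (i + 1) * N (Z i i))"
    by (intro mult_left_mono norm_nonneg)
  then show ?thesis using norm_mult[of "B i" "Z (i + 1) i"] by (simp add: algebra_simps)
qed (use Bn in \<open>simp add: norm_zero\<close>)

lemma norm_Z_diag_ge:
  assumes "1 \<le> i" "i \<le> n"
  shows "N (mat 1) / (N (A i) + tau N A B C (i - 1) * N (C (i - 1))
                     + omega N n A B C (i + 1) * N (B i)) \<le> N (Z i i)"
proof (rule divide_le_if_le_mult)
  have "N (mat 1) = N (C (i - 1) ** Z (i - 1) i + A i ** Z i i + B i ** Z (i + 1) i)"
    using block_row[OF assms assms] by simp
  also have "\<dots> \<le> N (C (i - 1) ** Z (i - 1) i) + N (A i ** Z i i) + N (B i ** Z (i + 1) i)"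
    using norm_triangle[of "C (i - 1) ** Z (i - 1) i + A i ** Z i i" "B i ** Z (i + 1) i"]
      norm_triangle[of "C (i - 1) ** Z (i - 1) i" "A i ** Z i i"] by linarith
  also have "\<dots> \<le> tau N A B C (i - 1) * N (C (i - 1)) * N (Z i i) + N (A i) * N (Z i i)
                  + omega N n A B C (i + 1) * N (B i) * N (Z i i)"
    by (intro add_mono norm_C_Z_le[OF assms] norm_B_Z_le[OF assms] norm_mult)
  finally show "N (mat 1) \<le> (N (A i) + tau N A B C (i - 1) * N (C (i - 1))
                               + omega N n A B C (i + 1) * N (B i)) * N (Z i i)"
    by (simp add: algebra_simps)
qed (simp_all add: norm_nonneg)

lemma norm_Z_diag_le:
  assumes "1 \<le> i" "i \<le> n"
    and pos: "0 < 1 / N (matrix_inv (A i)) - tau N A B C (i - 1) * N (C (i - 1))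
                - omega N n A B C (i + 1) * N (B i)"
  shows "N (Z i i) \<le> N (mat 1) / (1 / N (matrix_inv (A i)) - tau N A B C (i - 1) * N (C (i - 1))
                                    - omega N n A B C (i + 1) * N (B i))"
proof -
  let ?s = "tau N A B C (i - 1) * N (C (i - 1)) + omega N n A B C (i + 1) * N (B i)"
  have AZ: "A i ** Z i i = mat 1 - C (i - 1) ** Z (i - 1) i - B i ** Z (i + 1) i"
    using block_row[OF assms(1,2) assms(1,2)] by (simp add: algebra_simps)
  have "N (Z i i) \<le> N (matrix_inv (A i)) * N (A i ** Z i i)"
    using norm_mult[of "matrix_inv (A i)" "A i ** Z i i"]
    by (simp only: Z_eq_matrix_inv_mult[OF assms(1,2), symmetric])
  also have "N (A i ** Z i i) \<le> N (mat 1) + N (C (i - 1) ** Z (i - 1) i) + N (B i ** Z (i + 1) i)"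
    unfolding AZ using norm_diff[of "mat 1 - C (i - 1) ** Z (i - 1) i" "B i ** Z (i + 1) i"]
      norm_diff[of "mat 1" "C (i - 1) ** Z (i - 1) i"] by linarith
  also have "\<dots> \<le> N (mat 1) + ?s * N (Z i i)"
    using norm_C_Z_le[OF assms(1,2)] norm_B_Z_le[OF assms(1,2)] by (simp add: algebra_simps)
  finally have "N (Z i i) \<le> N (matrix_inv (A i)) * (N (mat 1) + ?s * N (Z i i))"
    by (simp add: mult_left_mono norm_nonneg)
  moreover have "0 < N (matrix_inv (A i))"
    using norm_pos matrix_inv_neq_0 A_inv[OF assms(1,2)] by blast
  moreover have "0 < 1 / N (matrix_inv (A i)) - ?s" using pos by (simp add: diff_diff_eq)
  ultimately have "N (Z i i) \<le> N (mat 1) / (1 / N (matrix_inv (A i)) - ?s)"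
    by (rule le_divide_if_le_mult_affine)
  then show ?thesis by (simp add: diff_diff_eq)
qed

end

theorem theorem2p6:
  fixes N :: "'m::finite cmat \<Rightarrow> real"
    and n :: nat
    and A B C :: "nat \<Rightarrow> 'm cmat"
    and Z :: "nat \<Rightarrow> nat \<Rightarrow> 'm cmat"
  assumes norm: "submult_matrix_norm N"
    and n2: "n \<ge> 2"
    and C0: "C 0 = 0" and Bn: "B n = 0"
    and nonsing: "block_nonsingular n (tridiag_block A B C)"
    and Zinv: "is_block_inverse n (tridiag_block A B C) Z"
    and BC_inv: "\<And>i. 1 \<le> i \<Longrightarrow> i \<le> n - 1 \<Longrightarrow> invertible (B i) \<and> invertible (C i)"
    and A_inv: "\<And>i. 1 \<le> i \<Longrightarrow> i \<le> n \<Longrightarrow> invertible (A i)"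
    and dom: "\<And>i. 1 \<le> i \<Longrightarrow> i \<le> n \<Longrightarrow>
               N (matrix_inv (A i) ** C (i - 1)) + N (matrix_inv (A i) ** B i) \<le> 1"
    and first: "N (matrix_inv (A 1) ** B 1) < 1"
    and last: "N (matrix_inv (A n) ** C (n - 1)) < 1"
  shows "(\<forall>i j. 1 \<le> i \<longrightarrow> i < j \<longrightarrow> j \<le> n \<longrightarrow>
            N (Z i j) \<le> N (Z j j) * (\<Prod>k\<in>{i..<j}. tau N A B C k))
       \<and> (\<forall>i j. 1 \<le> j \<longrightarrow> j < i \<longrightarrow> i \<le> n \<longrightarrow>
            N (Z i j) \<le> N (Z j j) * (\<Prod>k\<in>{j<..i}. omega N n A B C k))
       \<and> (\<forall>i. 1 \<le> i \<longrightarrow> i \<le> n \<longrightarrow>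
            N (mat 1) / (N (A i) + tau N A B C (i - 1) * N (C (i - 1))
                          + omega N n A B C (i + 1) * N (B i)) \<le> N (Z i i))
       \<and> (\<forall>i. 1 \<le> i \<longrightarrow> i \<le> n \<longrightarrow>
            1 / N (matrix_inv (A i)) - tau N A B C (i - 1) * N (C (i - 1))
              - omega N n A B C (i + 1) * N (B i) > 0 \<longrightarrow>
            N (Z i i) \<le> N (mat 1) / (1 / N (matrix_inv (A i)) - tau N A B C (i - 1) * N (C (i - 1))
              - omega N n A B C (i + 1) * N (B i)))"
proof -
  interpret block_tridiag_inverse N n A B C Z
    by unfold_locales (fact norm C0 Bn Zinv BC_inv A_inv dom first last)+
  show ?thesis
    using norm_Z_above_diag_le norm_Z_below_diag_le norm_Z_diag_ge norm_Z_diag_le by blast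
qed

end
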